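(* Let $m\geq 1$, let $\zeta=\zeta_m$ be a primitive $m$th root of unity, let $C_m$ be cyclic of order $m$ with generator $c$, and consider the cyclic Wedderburn embedding \[ \omega_m\colon\mathbb{Z}[\zeta]C_m\to\prod_{j\in[0,m-1]}\mathbb{Z}[\zeta],\qquad c\mapsto(\zeta^j)_{j\in[0,m-1]}. \] Then: (i) $G_{\zeta^{-1}}^{\mathrm{T}}\,V_{\zeta}\,G_{\zeta^{-1}}=m\,(D_{\zeta^{-1}})^{-1}$, and this is a diagonal matrix whose $(i+1)$st diagonal entry, $i\in[0,m-1]$, equals \[ \frac{m\,\zeta^{(i^2)}}{\prod_{j\in[1,i]}(1-\zeta^j)}. \] (ii) The image of $\omega_m$ is \[ \Bigl\{(y_j)_{j\in[0,m-1]}\in\prod_{j\in[0,m-1]}\mathbb{Z}[\zeta]\;\Bigm|\;\sum_{j\in[i,m-1]}y_j\begin{bmatrix}j\\ i\end{bmatrix}_{\zeta^{-1}}\in\mathbb{Z}[\zeta]\cdot\frac{m}{\prod_{j\in[1,i]}(1-\zeta^j)}\ \text{for all }i\in[0,m-1]\Bigr\}, \] where the membership is taken inside $\mathbb{Q}(\zeta)$. (iii) A $\mathbb{Z}[\zeta]$-linear basis of the image of $\omega_m$ is given by the elements, indexed by $j\in[0,m-1]$, \[ \Bigl((-1)^k\zeta^{\binom{k}{2}}\frac{m}{\prod_{l\in[1,j]}(1-\zeta^l)}\begin{bmatrix}j\\ k\end{bmatrix}_{\zeta}\Bigr)_{k\in[0,m-1]}\in\prod_{k\in[0,m-1]}\mathbb{Z}[\zeta].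 \]
   Context: For an indeterminate $q$ and integers $i\ge0$, $j\in\mathbb{Z}$: $[i]=(q^i-1)/(q-1)$, $[i]!=\prod_{k=1}^i[k]$ (so $[0]!=1$), and the Gaussian binomial $\begin{bmatrix}i\\ j\end{bmatrix}=\begin{bmatrix}i\\ j\end{bmatrix}_q=[i]!/([j]![i-j]!)$ if $j\in[0,i]$ and $0$ otherwise; specializing $q$ to a root of unity gives the values written with subscript. The $m\times m$ matrices (rows and columns indexed by $[0,m-1]$) are $G_q=(\begin{bmatrix}i\\ j\end{bmatrix})_{i,j}$, $V_q=(q^{ij})_{i,j}$, and $D_q$ the diagonal matrix with $i$th entry $[i]!\,(q-1)^i\,q^{\binom{i}{2}}$; $^{\mathrm T}$ denotes transpose. Interval $[a,b]=\{x\in\mathbb{Z}:a\le x\le b\}$. *)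

theory Defs
  imports Complex_Main "HOL-Computational_Algebra.Polynomial"
begin

text \<open>q-integers, q-factorials and Gaussian binomials, evaluated at a complex number q.
  [i]_q is written as the polynomial 1 + q + ... + q^(i-1), which equals (q^i-1)/(q-1)
  for q \<noteq> 1 and is its polynomial specialization in general.\<close>
definition qint :: "complex \<Rightarrow> nat \<Rightarrow> complex" where
  "qint q i = (\<Sum>k<i. q ^ k)"

definition qfact :: "complex \<Rightarrow> nat \<Rightarrow> complex" where
  "qfact q i = (\<Prod>k\<in>{1..i}. qint q k)"

definition qbinom :: "complex \<Rightarrow> nat \<Rightarrow> nat \<Rightarrow> complex" where
  "qbinom q i j = (if j \<le> i then qfact q i / (qfact q j * qfact q (i - j)) else 0)"

text \<open>m x m matrices indexed by [0,m-1], represented as functions nat => nat => complex.\<close>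
definition Gmat :: "complex \<Rightarrow> nat \<Rightarrow> nat \<Rightarrow> complex" where
  "Gmat q i j = qbinom q i j"

definition Vmat :: "complex \<Rightarrow> nat \<Rightarrow> nat \<Rightarrow> complex" where
  "Vmat q i j = q ^ (i * j)"

definition Ddiag :: "complex \<Rightarrow> nat \<Rightarrow> complex" where
  "Ddiag q i = qfact q i * (q - 1) ^ i * q ^ (i choose 2)"

definition mtrans :: "(nat \<Rightarrow> nat \<Rightarrow> complex) \<Rightarrow> nat \<Rightarrow> nat \<Rightarrow> complex" where
  "mtrans A i j = A j i"

definition mmult :: "nat \<Rightarrow> (nat \<Rightarrow> nat \<Rightarrow> complex) \<Rightarrow> (nat \<Rightarrow> nat \<Rightarrow> complex)
    \<Rightarrow> nat \<Rightarrow> nat \<Rightarrow> complex" where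
  "mmult m A B i j = (\<Sum>k<m. A i k * B k j)"

definition Zz :: "complex \<Rightarrow> complex set" where
  "Zz z = {x. \<exists>p :: int poly. x = poly (map_poly of_int p) z}"

definition prodZ :: "nat \<Rightarrow> complex \<Rightarrow> (nat \<Rightarrow> complex) set" where
  "prodZ m z = {y. (\<forall>j<m. y j \<in> Zz z) \<and> (\<forall>j\<ge>m. y j = 0)}"

text \<open>An element sum_{k<m} a_k c^k of the group ring Z[zeta]C_m is represented by its
  coefficient vector a in prodZ m z; omega_m sends c to (zeta^j)_j.\<close>
definition omega :: "nat \<Rightarrow> complex \<Rightarrow> (nat \<Rightarrow> complex) \<Rightarrow> nat \<Rightarrow> complex" where
  "omega m z a = (\<lambda>j. if j < m then (\<Sum>k<m. a k * z ^ (j * k)) else 0)"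

definition omega_image :: "nat \<Rightarrow> complex \<Rightarrow> (nat \<Rightarrow> complex) set" where
  "omega_image m z = omega m z ` prodZ m z"

definition bvec :: "nat \<Rightarrow> complex \<Rightarrow> nat \<Rightarrow> nat \<Rightarrow> complex" where
  "bvec m z j = (\<lambda>k. if k < m then
      (-1) ^ k * z ^ (k choose 2) * (of_nat m / (\<Prod>l\<in>{1..j}. 1 - z ^ l)) * qbinom z j k
     else 0)"

end

theory Submission
  imports Defs
begin

text \<open>Put q = 1/z. The q-Newton expansion x^i = sum_k [i,k]_q (x-1)(x-q)...(x-q^(k-1)),
  evaluated at x = q^j, factors the Vandermonde matrix as V_q = G_q D_q G_q^T. Orthogonality of the
  characters of C_m gives V_z V_q = m I, hence G_q^T V_z G_q = m D_q^(-1). The map omega_m is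
  multiplication by V_z, and G_q is unitriangular with inverse over Z[z]; writing a = G_q w therefore
  shows that G_q^T maps the image of omega_m onto the vectors whose i-th entry lies in
  (m / D_q,i) Z[z], and D_q,i differs from prod_{j<=i} (1 - z^j) by the unit z^(i^2).
  By the q-binomial theorem the rows of G_q^(-1) are the coefficient vectors of the products
  (x-1)...(x-q^(k-1)); the proposed basis vectors are these rows scaled by m / D_q,j and a unit,
  so G_q^T sends them to a rescaled standard basis.\<close>

lemma map_poly_of_int_add:
  "map_poly (of_int :: int \<Rightarrow> complex) (p + q) = map_poly of_int p + map_poly of_int q"
  by (rule poly_eqI) (simp add: coeff_map_poly)

lemma map_poly_of_int_mult:
  "map_poly (of_int :: int \<Rightarrow> complex) (p * q) = map_poly of_int p * map_poly of_int q"
  by (rule poly_eqI) (simp add: coeff_map_poly coeff_mult)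

lemma map_poly_of_int_uminus: "map_poly (of_int :: int \<Rightarrow> complex) (- p) = - map_poly of_int p"
  by (rule poly_eqI) (simp add: coeff_map_poly)

lemma Zz_add: "a \<in> Zz z \<Longrightarrow> b \<in> Zz z \<Longrightarrow> a + b \<in> Zz z"
  unfolding Zz_def by clarsimp (metis map_poly_of_int_add poly_add)

lemma Zz_mult: "a \<in> Zz z \<Longrightarrow> b \<in> Zz z \<Longrightarrow> a * b \<in> Zz z"
  unfolding Zz_def by clarsimp (metis map_poly_of_int_mult poly_mult)

lemma Zz_uminus: "a \<in> Zz z \<Longrightarrow> - a \<in> Zz z"
  unfolding Zz_def by clarsimp (metis map_poly_of_int_uminus poly_minus)

lemma Zz_of_int: "of_int c \<in> Zz z"
  unfolding Zz_def by (rule CollectI, rule exI[of _ "[:c:]"]) (simp add: map_poly_pCons)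

lemma Zz_0: "0 \<in> Zz z"
  using Zz_of_int[of 0 z] by simp

lemma Zz_1: "1 \<in> Zz z"
  using Zz_of_int[of 1 z] by simp

lemma Zz_self: "z \<in> Zz z"
  unfolding Zz_def by (rule CollectI, rule exI[of _ "[:0, 1:]"]) (simp add: map_poly_pCons)

lemma Zz_power: "a \<in> Zz z \<Longrightarrow> a ^ n \<in> Zz z"
  by (induction n) (auto intro: Zz_mult Zz_1)

lemma Zz_neg_one_power: "(- 1) ^ n \<in> Zz z"
  by (intro Zz_power Zz_uminus Zz_1)

lemma Zz_sum: "(\<And>i. i \<in> A \<Longrightarrow> f i \<in> Zz z) \<Longrightarrow> sum f A \<in> Zz z"
  by (induction A rule: infinite_finite_induct) (auto intro: Zz_add Zz_0)

text \<open>Since qbinom is defined by division, its identities only hold where the relevant q-factorials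
  are nonzero.\<close>

definition qint_nonzero_upto :: "complex \<Rightarrow> nat \<Rightarrow> bool" where
  "qint_nonzero_upto q N \<longleftrightarrow> (\<forall>k. 1 \<le> k \<longrightarrow> k \<le> N \<longrightarrow> qint q k \<noteq> 0)"

lemma qint_Suc: "qint q (Suc n) = qint q n + q ^ n"
  by (simp add: qint_def)

lemma qint_add: "qint q (a + b) = qint q a + q ^ a * qint q b"
  by (induction b) (simp_all add: qint_def algebra_simps power_add)

lemma qint_times_diff_one: "qint q n * (q - 1) = q ^ n - 1"
  by (induction n) (simp_all add: qint_Suc algebra_simps, simp add: qint_def)

lemma qint_nonzero_uptoI:
  assumes "\<And>k. 0 < k \<Longrightarrow> k \<le> N \<Longrightarrow> q ^ k \<noteq> 1"
  shows "qint_nonzero_upto q N"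
  unfolding qint_nonzero_upto_def
proof (intro allI impI)
  fix k assume "1 \<le> k" "k \<le> N"
  then have "qint q k * (q - 1) \<noteq> 0"
    using assms by (simp add: qint_times_diff_one)
  then show "qint q k \<noteq> 0" by auto
qed

lemma qfact_0 [simp]: "qfact q 0 = 1"
  by (simp add: qfact_def)

lemma qfact_Suc: "qfact q (Suc n) = qfact q n * qint q (Suc n)"
  by (simp add: qfact_def atLeastAtMostSuc_conv mult.commute)

lemma qfact_nonzero: "qint_nonzero_upto q N \<Longrightarrow> n \<le> N \<Longrightarrow> qfact q n \<noteq> 0"
  by (induction n) (auto simp: qfact_Suc qint_nonzero_upto_def)

lemma qbinom_0_right: "qint_nonzero_upto q N \<Longrightarrow> n \<le> N \<Longrightarrow> qbinom q n 0 = 1"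
  using qfact_nonzero[of q N n] by (simp add: qbinom_def)

lemma qbinom_self: "qint_nonzero_upto q N \<Longrightarrow> n \<le> N \<Longrightarrow> qbinom q n n = 1"
  using qfact_nonzero[of q N n] by (simp add: qbinom_def)

lemma qbinom_eq_0: "n < k \<Longrightarrow> qbinom q n k = 0"
  by (simp add: qbinom_def)

lemma qbinom_Suc_Suc:
  assumes ok: "qint_nonzero_upto q N" and n: "Suc n \<le> N"
  shows "qbinom q (Suc n) (Suc k) = qbinom q n k + q ^ Suc k * qbinom q n (Suc k)"
proof (cases "k < n")
  case False
  then show ?thesis
    using qbinom_self[OF ok] n by (cases "k = n") (simp_all add: qbinom_eq_0)
next
  case True
  then obtain r where r: "n = k + Suc r"
    by (metis add_Suc_right less_imp_Suc_add)
  have nz: "qfact q k \<noteq> 0" "qfact q r \<noteq> 0" "qint q (Suc k) \<noteq> 0" "qint q (Suc r) \<noteq> 0"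
    using qfact_nonzero[OF ok, of k] qfact_nonzero[OF ok, of r] ok n r
    by (auto simp: qint_nonzero_upto_def)
  have e: "Suc n - Suc k = Suc r" "n - k = Suc r" "n - Suc k = r"
    using r by auto
  have "qint q (Suc n) = qint q (Suc k) + q ^ Suc k * qint q (Suc r)"
    using qint_add[of q "Suc k" "Suc r"] r by simp
  then have "qbinom q (Suc n) (Suc k) = qfact q n * (qint q (Suc k) + q ^ Suc k * qint q (Suc r))
      / ((qfact q k * qint q (Suc k)) * (qfact q r * qint q (Suc r)))"
    using True by (simp add: qbinom_def e qfact_Suc)
  also have "\<dots> = qfact q n / (qfact q k * (qfact q r * qint q (Suc r)))
      + q ^ Suc k * (qfact q n / ((qfact q k * qint q (Suc k)) * qfact q r))"
    using nz by (simp add: field_simps)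
  also have "\<dots> = qbinom q n k + q ^ Suc k * qbinom q n (Suc k)"
    using True by (simp add: qbinom_def e qfact_Suc)
  finally show ?thesis .
qed

lemma qbinom_Suc_right_mult:
  assumes ok: "qint_nonzero_upto q N" and kj: "k < j" and jN: "j \<le> N"
  shows "qbinom q j (Suc k) * qint q (Suc k) = qbinom q j k * qint q (j - k)"
proof -
  obtain r where r: "j = k + Suc r"
    using kj by (metis add_Suc_right less_imp_Suc_add)
  have nz: "qfact q k \<noteq> 0" "qfact q r \<noteq> 0" "qint q (Suc k) \<noteq> 0" "qint q (Suc r) \<noteq> 0"
    using qfact_nonzero[OF ok, of k] qfact_nonzero[OF ok, of r] ok jN r
    by (auto simp: qint_nonzero_upto_def)
  have e: "j - k = Suc r" "j - Suc k = r"
    using r by auto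
  have "qbinom q j (Suc k) * qint q (Suc k)
      = qfact q j / ((qfact q k * qint q (Suc k)) * qfact q r) * qint q (Suc k)"
    using kj by (simp add: qbinom_def e qfact_Suc)
  also have "\<dots> = qfact q j / (qfact q k * (qfact q r * qint q (Suc r))) * qint q (Suc r)"
    using nz by (simp add: field_simps)
  also have "\<dots> = qbinom q j k * qint q (j - k)"
    using kj by (simp add: qbinom_def e qfact_Suc)
  finally show ?thesis .
qed

lemma qbinom_in_Zz:
  assumes ok: "qint_nonzero_upto q N" and q: "q \<in> Zz z" and n: "n \<le> N"
  shows "qbinom q n k \<in> Zz z"
  using n
proof (induction n arbitrary: k)
  case 0
  then show ?case
    using qbinom_0_right[OF ok] by (cases k) (auto simp: qbinom_eq_0 Zz_0 Zz_1)
next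
  case (Suc n)
  then show ?case
    using qbinom_0_right[OF ok Suc.prems] qbinom_Suc_Suc[OF ok Suc.prems]
    by (cases k) (auto intro!: Zz_add Zz_mult Zz_power q Zz_1)
qed

definition qfalling :: "complex \<Rightarrow> nat \<Rightarrow> complex \<Rightarrow> complex" where
  "qfalling q k x = (\<Prod>t<k. x - q ^ t)"

lemma qfalling_0 [simp]: "qfalling q 0 x = 1"
  by (simp add: qfalling_def)

lemma qfalling_Suc: "qfalling q (Suc k) x = qfalling q k x * (x - q ^ k)"
  by (simp add: qfalling_def)

lemma power_eq_sum_qbinom_qfalling:
  assumes ok: "qint_nonzero_upto q N" and i: "i \<le> N"
  shows "x ^ i = (\<Sum>k\<le>i. qbinom q i k * qfalling q k x)"
  using i
proof (induction i)
  case 0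
  then show ?case using qbinom_0_right[OF ok] by simp
next
  case (Suc i)
  have "x ^ Suc i = (\<Sum>k\<le>i. qbinom q i k * (x * qfalling q k x))"
    using Suc by (simp add: sum_distrib_left algebra_simps)
  also have "\<dots> = (\<Sum>k\<le>i. qbinom q i k * qfalling q (Suc k) x)
      + (\<Sum>k\<le>i. q ^ k * qbinom q i k * qfalling q k x)"
    by (simp add: qfalling_Suc sum.distrib[symmetric] algebra_simps)
  also have "(\<Sum>k\<le>i. q ^ k * qbinom q i k * qfalling q k x)
      = (\<Sum>k\<le>Suc i. q ^ k * qbinom q i k * qfalling q k x)"
    by (simp add: qbinom_eq_0)
  also have "\<dots> = 1 + (\<Sum>k\<le>i. q ^ Suc k * qbinom q i (Suc k) * qfalling q (Suc k) x)"
    using qbinom_0_right[OF ok, of i] Suc.prems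
    by (simp add: sum.atMost_Suc_shift del: sum.atMost_Suc power_Suc)
  finally have "x ^ Suc i
      = 1 + (\<Sum>k\<le>i. (qbinom q i k + q ^ Suc k * qbinom q i (Suc k)) * qfalling q (Suc k) x)"
    by (simp add: sum.distrib algebra_simps)
  also have "\<dots> = (\<Sum>k\<le>Suc i. qbinom q (Suc i) k * qfalling q k x)"
    using qbinom_Suc_Suc[OF ok Suc.prems] qbinom_0_right[OF ok Suc.prems]
    by (simp add: sum.atMost_Suc_shift del: sum.atMost_Suc)
  finally show ?case .
qed

lemma zero_choose_two [simp]: "0 choose 2 = 0"
  by simp

lemma Suc_choose_two: "Suc k choose 2 = (k choose 2) + k"
  by (simp add: numeral_2_eq_2)

lemma Ddiag_Suc: "Ddiag q (Suc k) = Ddiag q k * (qint q (Suc k) * (q - 1) * q ^ k)"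
  by (simp add: Ddiag_def qfact_Suc Suc_choose_two power_add algebra_simps)

lemma qfalling_qpower:
  assumes ok: "qint_nonzero_upto q N" and j: "j \<le> N"
  shows "qfalling q k (q ^ j) = qbinom q j k * Ddiag q k"
proof (induction k)
  case 0
  then show ?case using qbinom_0_right[OF ok j] by (simp add: Ddiag_def)
next
  case (Suc k)
  show ?case
  proof (cases "k < j")
    case True
    have "qbinom q j (Suc k) * Ddiag q (Suc k)
        = (qbinom q j (Suc k) * qint q (Suc k)) * (Ddiag q k * (q - 1) * q ^ k)"
      by (simp add: Ddiag_Suc algebra_simps)
    also have "\<dots> = qbinom q j k * Ddiag q k * ((qint q (j - k) * (q - 1)) * q ^ k)"
      by (subst qbinom_Suc_right_mult[OF ok True j]) (simp add: algebra_simps)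
    also have "\<dots> = qbinom q j k * Ddiag q k * ((q ^ (j - k) - 1) * q ^ k)"
      by (simp only: qint_times_diff_one)
    also have "\<dots> = qbinom q j k * Ddiag q k * (q ^ j - q ^ k)"
      using True by (simp add: algebra_simps power_add[symmetric])
    finally show ?thesis by (simp add: qfalling_Suc Suc.IH)
  next
    case False
    then show ?thesis
      using Suc.IH by (cases "k = j") (simp_all add: qfalling_Suc qbinom_eq_0)
  qed
qed

lemma qbinomial_theorem:
  assumes ok: "qint_nonzero_upto q N" and n: "n \<le> N"
  shows "(\<Prod>t<n. 1 - x * q ^ t) = (\<Sum>l\<le>n. qbinom q n l * (- 1) ^ l * q ^ (l choose 2) * x ^ l)"
  using n
proof (induction n arbitrary: x)
  case 0
  then show ?case using qbinom_0_right[OF ok] by simp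
next
  case (Suc n)
  define c where "c l = qbinom q n l * (- 1) ^ l * q ^ (l choose 2)" for l
  have c_Suc: "qbinom q n l * (- 1) ^ Suc l * q ^ (Suc l choose 2) * x ^ Suc l = - x * (c l * (q * x) ^ l)"
    for l by (simp add: c_def Suc_choose_two power_add power_mult_distrib)
  have shift: "(\<Sum>l\<le>n. c l * (q * x) ^ l)
      = 1 + (\<Sum>l\<le>n. q ^ Suc l * qbinom q n (Suc l) * (- 1) ^ Suc l * q ^ (Suc l choose 2) * x ^ Suc l)"
  proof -
    have "(\<Sum>l\<le>n. c l * (q * x) ^ l) = (\<Sum>l\<le>Suc n. c l * (q * x) ^ l)"
      by (simp add: c_def qbinom_eq_0)
    also have "\<dots> = 1 + (\<Sum>l\<le>n. c (Suc l) * (q * x) ^ Suc l)"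
      using qbinom_0_right[OF ok, of n] Suc.prems
      by (simp add: c_def sum.atMost_Suc_shift del: sum.atMost_Suc)
    finally show ?thesis
      by (simp add: c_def Suc_choose_two power_add power_mult_distrib mult_ac)
  qed
  have times_x: "- x * (\<Sum>l\<le>n. c l * (q * x) ^ l)
      = (\<Sum>l\<le>n. qbinom q n l * (- 1) ^ Suc l * q ^ (Suc l choose 2) * x ^ Suc l)"
    by (simp only: c_Suc sum_distrib_left)
  have "(\<Prod>t<Suc n. 1 - x * q ^ t) = (1 - x) * (\<Prod>t<n. 1 - (q * x) * q ^ t)"
    by (subst prod.lessThan_Suc_shift) (simp add: algebra_simps del: prod.lessThan_Suc)
  also have "\<dots> = (\<Sum>l\<le>n. c l * (q * x) ^ l) + - x * (\<Sum>l\<le>n. c l * (q * x) ^ l)"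
    using Suc.IH[of "q * x"] Suc.prems unfolding c_def by (simp add: algebra_simps)
  also have "\<dots> = 1
      + (\<Sum>l\<le>n. q ^ Suc l * qbinom q n (Suc l) * (- 1) ^ Suc l * q ^ (Suc l choose 2) * x ^ Suc l)
      + (\<Sum>l\<le>n. qbinom q n l * (- 1) ^ Suc l * q ^ (Suc l choose 2) * x ^ Suc l)"
    by (simp only: times_x) (simp only: shift)
  also have "\<dots> = 1 + (\<Sum>l\<le>n. (qbinom q n l + q ^ Suc l * qbinom q n (Suc l))
      * (- 1) ^ Suc l * q ^ (Suc l choose 2) * x ^ Suc l)"
    by (simp add: sum.distrib[symmetric] algebra_simps)
  also have "\<dots> = (\<Sum>l\<le>Suc n. qbinom q (Suc n) l * (- 1) ^ l * q ^ (l choose 2) * x ^ l)"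
    using qbinom_Suc_Suc[OF ok Suc.prems] qbinom_0_right[OF ok Suc.prems]
    by (simp add: sum.atMost_Suc_shift del: sum.atMost_Suc power_Suc)
  finally show ?case .
qed

lemma qfalling_eq_prod_inverse:
  assumes "q * z = 1"
  shows "qfalling q k x = (- 1) ^ k * q ^ (k choose 2) * (\<Prod>t<k. 1 - x * z ^ t)"
proof (induction k)
  case 0
  then show ?case by simp
next
  case (Suc k)
  have "x - q ^ k = - (q ^ k) * (1 - x * z ^ k)"
    using assms by (simp add: algebra_simps power_mult_distrib[symmetric])
  then show ?case by (simp add: qfalling_Suc Suc.IH Suc_choose_two power_add)
qed

lemma Ddiag_mult_power_square:
  assumes qz: "q * z = 1"
  shows "Ddiag q i * z ^ (i\<^sup>2) = (\<Prod>j\<in>{1..i}. 1 - z ^ j)"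
proof (induction i)
  case 0
  then show ?case by (simp add: Ddiag_def)
next
  case (Suc i)
  have "qint q (Suc i) * (q - 1) * q ^ i * (z ^ i * z ^ Suc i) = (q ^ Suc i - 1) * z ^ Suc i * (q * z) ^ i"
    unfolding qint_times_diff_one by (simp add: power_mult_distrib mult_ac)
  also have "\<dots> = 1 - z ^ Suc i"
    using qz by (simp add: algebra_simps power_mult_distrib[symmetric])
  finally have step: "qint q (Suc i) * (q - 1) * q ^ i * (z ^ i * z ^ Suc i) = 1 - z ^ Suc i" .
  have "z ^ (Suc i)\<^sup>2 = z ^ i\<^sup>2 * (z ^ i * z ^ Suc i)"
    by (simp add: power2_eq_square power_add[symmetric] algebra_simps)
  then have "Ddiag q (Suc i) * z ^ (Suc i)\<^sup>2
      = (Ddiag q i * z ^ i\<^sup>2) * (qint q (Suc i) * (q - 1) * q ^ i * (z ^ i * z ^ Suc i))"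
    by (simp add: Ddiag_Suc algebra_simps)
  then show ?case
    using Suc step by (simp add: atLeastAtMostSuc_conv)
qed

lemma power_mult_eq_sum_Gmat_Ddiag:
  assumes ok: "qint_nonzero_upto q N" and i: "i \<le> N" and j: "j \<le> N" and N: "N < m"
  shows "q ^ (i * j) = (\<Sum>k<m. Gmat q i k * Ddiag q k * Gmat q j k)"
proof -
  have "q ^ (i * j) = (q ^ j) ^ i"
    by (simp add: power_mult[symmetric] mult.commute)
  also have "\<dots> = (\<Sum>k\<le>i. qbinom q i k * qfalling q k (q ^ j))"
    by (rule power_eq_sum_qbinom_qfalling[OF ok i])
  also have "\<dots> = (\<Sum>k\<le>i. Gmat q i k * Ddiag q k * Gmat q j k)"
    by (simp add: qfalling_qpower[OF ok j] Gmat_def mult_ac)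
  also have "\<dots> = (\<Sum>k<m. Gmat q i k * Ddiag q k * Gmat q j k)"
    by (rule sum.mono_neutral_left) (use i N in \<open>auto simp: Gmat_def qbinom_eq_0\<close>)
  finally show ?thesis .
qed

definition mvmult :: "nat \<Rightarrow> (nat \<Rightarrow> nat \<Rightarrow> complex) \<Rightarrow> (nat \<Rightarrow> complex) \<Rightarrow> nat \<Rightarrow> complex" where
  "mvmult m A x i = (\<Sum>k<m. A i k * x k)"

lemma mvmult_cong: "(\<And>k. k < m \<Longrightarrow> x k = y k) \<Longrightarrow> mvmult m A x i = mvmult m A y i"
  by (simp add: mvmult_def)

lemma mvmult_mmult: "mvmult m (mmult m A B) x i = mvmult m A (mvmult m B x) i"
  unfolding mvmult_def mmult_def sum_distrib_left sum_distrib_right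
  by (subst sum.swap) (simp add: mult.assoc)

lemma mmult_assoc: "mmult m (mmult m A B) C i j = mmult m A (mmult m B C) i j"
  unfolding mmult_def sum_distrib_left sum_distrib_right
  by (subst sum.swap) (simp add: mult.assoc)

lemma lower_triangular_kernel:
  assumes diag: "\<And>j. j < m \<Longrightarrow> L j j \<noteq> 0"
    and lower: "\<And>j k. j < k \<Longrightarrow> L j k = 0"
    and kernel: "\<And>j. j < m \<Longrightarrow> mvmult m L x j = 0"
    and j: "j < m"
  shows "x j = 0"
  using j
proof (induction j rule: less_induct)
  case (less j)
  have "mvmult m L x j = (\<Sum>k<m. if k = j then L j j * x j else 0)"
    unfolding mvmult_def
    by (rule sum.cong) (use less lower in \<open>auto dest: nat_neq_iff[THEN iffD1]\<close>)
  then show ?case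
    using kernel[OF less.prems] diag[OF less.prems] less.prems by simp
qed

locale primitive_root =
  fixes m :: nat and z :: complex
  assumes m_pos: "m \<ge> 1"
    and root: "z ^ m = 1"
    and primitive: "\<And>k. 0 < k \<Longrightarrow> k < m \<Longrightarrow> z ^ k \<noteq> 1"
begin

abbreviation G :: "nat \<Rightarrow> nat \<Rightarrow> complex" where
  "G \<equiv> Gmat (inverse z)"

abbreviation D :: "nat \<Rightarrow> complex" where
  "D \<equiv> Ddiag (inverse z)"

abbreviation P :: "nat \<Rightarrow> complex" where
  "P i \<equiv> \<Prod>j\<in>{1..i}. 1 - z ^ j"

lemma z_nonzero: "z \<noteq> 0"
  using root m_pos by (cases "z = 0") (auto simp: power_0_left)

lemma power_z_mult_inverse: "z ^ n * inverse z ^ n = 1"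
  using z_nonzero by (simp add: power_inverse)

lemma inverse_z_in_Zz: "inverse z \<in> Zz z"
proof -
  have "z ^ (m - 1) * z = 1"
    using root m_pos by (simp add: power_Suc2[symmetric])
  then have "inverse z = z ^ (m - 1)"
    using z_nonzero by (simp add: field_simps)
  then show ?thesis
    by (simp add: Zz_power Zz_self)
qed

lemma power_z_inj:
  assumes "i < m" "j < m" "z ^ i = z ^ j"
  shows "i = j"
proof -
  have False if ab: "a < b" "b < m" "z ^ a = z ^ b" for a b
  proof -
    have "z ^ b = z ^ a * z ^ (b - a)"
      using ab(1) by (simp flip: power_add)
    then have "z ^ a * z ^ (b - a) = z ^ a * 1"
      using ab(3) by simp
    then have "z ^ (b - a) = 1"
      using z_nonzero by simp
    then show False
      using primitive[of "b - a"] ab by simp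
  qed
  then show ?thesis
    using assms by (metis linorder_neqE_nat)
qed

lemma qint_nonzero_z: "qint_nonzero_upto z (m - 1)"
  by (rule qint_nonzero_uptoI) (use primitive in auto)

lemma qint_nonzero_inverse_z: "qint_nonzero_upto (inverse z) (m - 1)"
  by (rule qint_nonzero_uptoI) (use primitive in \<open>auto simp: power_inverse\<close>)

lemma P_nonzero: "k < m \<Longrightarrow> P k \<noteq> 0"
  using primitive by auto

lemma D_eq: "D i = P i * inverse z ^ i\<^sup>2"
  using Ddiag_mult_power_square[of "inverse z" z i] z_nonzero
  by (simp add: field_simps power_inverse)

lemma D_nonzero: "k < m \<Longrightarrow> D k \<noteq> 0"
  using P_nonzero z_nonzero by (simp add: D_eq)

lemma m_div_D: "of_nat m / D i = z ^ i\<^sup>2 * (of_nat m / P i)"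
  unfolding D_eq using z_nonzero
  by (simp add: power_inverse divide_inverse inverse_mult_distrib mult_ac)

lemma G_diag: "j < m \<Longrightarrow> G j j = 1"
  unfolding Gmat_def by (rule qbinom_self[OF qint_nonzero_inverse_z]) simp

lemma G_upper: "j < k \<Longrightarrow> G j k = 0"
  unfolding Gmat_def by (rule qbinom_eq_0)

lemma G_in_Zz: "j < m \<Longrightarrow> G j k \<in> Zz z"
  unfolding Gmat_def by (rule qbinom_in_Zz[OF qint_nonzero_inverse_z inverse_z_in_Zz]) simp

lemma orthogonality:
  assumes i: "i < m" and j: "j < m"
  shows "(\<Sum>k<m. z ^ (i * k) * inverse z ^ (k * j)) = (if i = j then of_nat m else 0)"
proof -
  define w where "w = z ^ i * inverse z ^ j"
  have terms: "z ^ (i * k) * inverse z ^ (k * j) = w ^ k" for k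
    by (simp add: w_def power_mult_distrib power_mult[symmetric] mult.commute)
  show ?thesis
  proof (cases "i = j")
    case True
    then have "w = 1"
      using power_z_mult_inverse by (simp add: w_def)
    then show ?thesis
      using True unfolding terms by simp
  next
    case False
    have "w \<noteq> 1"
    proof
      assume "w = 1"
      then have "z ^ i = z ^ j"
        using z_nonzero by (simp add: w_def power_inverse field_simps)
      then show False
        using power_z_inj i j False by blast
    qed
    moreover have "w ^ m = 1"
      by (simp add: w_def power_mult_distrib power_mult[symmetric] mult.commute[of _ m] power_mult
          root power_inverse)
    ultimately show ?thesis
      using False by (simp add: terms sum_gp_strict)
  qed
qed

lemma Gmat_transpose_Vmat_Gmat:
  assumes a: "a < m" and k: "k < m"
  shows "mmult m (mmult m (mtrans G) (Vmat z)) G a k = (if a = k then of_nat m / D k else 0)"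
proof -
  define M where "M = mmult m (mmult m (mtrans G) (Vmat z)) G"
  have VG: "(\<Sum>l<m. mmult m (Vmat z) G i l * D l * G j l) = (if i = j then of_nat m else 0)"
    if "i < m" "j < m" for i j
  proof -
    have "(\<Sum>l<m. mmult m (Vmat z) G i l * D l * G j l)
        = (\<Sum>k<m. z ^ (i * k) * (\<Sum>l<m. G k l * D l * G j l))"
      unfolding mmult_def Vmat_def sum_distrib_right sum_distrib_left
      by (subst sum.swap) (simp add: mult.assoc)
    also have "\<dots> = (\<Sum>k<m. z ^ (i * k) * inverse z ^ (k * j))"
      using power_mult_eq_sum_Gmat_Ddiag[OF qint_nonzero_inverse_z, of _ j m] that
      by (intro sum.cong) auto
    finally show ?thesis
      using orthogonality that by simp
  qed
  have MDG: "(\<Sum>l<m. M a l * D l * G j l) = of_nat m * G j a" if j: "j < m" for j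
  proof -
    have "(\<Sum>l<m. M a l * D l * G j l)
        = (\<Sum>i<m. G i a * (\<Sum>l<m. mmult m (Vmat z) G i l * D l * G j l))"
      unfolding M_def mmult_assoc
      unfolding mmult_def mtrans_def sum_distrib_right sum_distrib_left
      by (subst sum.swap) (simp add: mult.assoc)
    then show ?thesis
      using j by (simp add: VG if_distrib cong: if_cong)
  qed
  define r where "r l = M a l * D l - (if l = a then of_nat m else 0)" for l
  have kernel: "mvmult m G r j = 0" if j: "j < m" for j
  proof -
    have "mvmult m G r j = (\<Sum>l<m. M a l * D l * G j l) - (\<Sum>l<m. if l = a then of_nat m * G j a else 0)"
      unfolding mvmult_def r_def sum_subtractf[symmetric] by (rule sum.cong) (auto simp: algebra_simps)
    then show ?thesis
      using a by (simp add: MDG[OF j])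
  qed
  have "r k = 0"
    by (rule lower_triangular_kernel[OF _ G_upper kernel k]) (simp add: G_diag)
  then show ?thesis
    using D_nonzero[OF k] unfolding M_def[symmetric] r_def by (auto simp: field_simps)
qed

definition Ginv :: "nat \<Rightarrow> nat \<Rightarrow> complex" where
  "Ginv k l = (- 1) ^ k * inverse z ^ (k choose 2) * (qbinom z k l * (- 1) ^ l * z ^ (l choose 2))"

lemma Ginv_in_Zz: "k < m \<Longrightarrow> Ginv k l \<in> Zz z"
  unfolding Ginv_def
  by (intro Zz_mult Zz_power Zz_neg_one_power Zz_self inverse_z_in_Zz
      qbinom_in_Zz[OF qint_nonzero_z Zz_self]) simp

lemma qfalling_eq_sum_Ginv:
  assumes k: "k < m"
  shows "qfalling (inverse z) k x = (\<Sum>l<m. Ginv k l * x ^ l)"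
proof -
  have "qfalling (inverse z) k x = (- 1) ^ k * inverse z ^ (k choose 2) * (\<Prod>t<k. 1 - x * z ^ t)"
    using z_nonzero by (simp add: qfalling_eq_prod_inverse)
  also have "(\<Prod>t<k. 1 - x * z ^ t) = (\<Sum>l\<le>k. qbinom z k l * (- 1) ^ l * z ^ (l choose 2) * x ^ l)"
    by (rule qbinomial_theorem[OF qint_nonzero_z]) (use k in simp)
  also have "\<dots> = (\<Sum>l<m. qbinom z k l * (- 1) ^ l * z ^ (l choose 2) * x ^ l)"
    by (rule sum.mono_neutral_left) (use k in \<open>auto simp: qbinom_eq_0\<close>)
  finally show ?thesis
    by (simp add: Ginv_def sum_distrib_left mult_ac)
qed

lemma Gmat_Ginv:
  assumes i: "i < m" and j: "j < m"
  shows "mmult m G Ginv i j = (if i = j then 1 else 0)"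
proof -
  have expand: "z ^ (s * i) = (\<Sum>l<m. mmult m G Ginv i l * z ^ (s * l))" for s
  proof -
    have "z ^ (s * i) = (\<Sum>k\<le>i. G i k * qfalling (inverse z) k (z ^ s))"
      using power_eq_sum_qbinom_qfalling[OF qint_nonzero_inverse_z, of i "z ^ s"] i
      by (simp add: Gmat_def power_mult)
    also have "\<dots> = (\<Sum>k<m. G i k * qfalling (inverse z) k (z ^ s))"
      by (rule sum.mono_neutral_left) (use i in \<open>auto simp: G_upper\<close>)
    also have "\<dots> = (\<Sum>k<m. G i k * (\<Sum>l<m. Ginv k l * z ^ (s * l)))"
      by (simp add: qfalling_eq_sum_Ginv power_mult)
    finally show ?thesis
      unfolding mmult_def sum_distrib_left sum_distrib_right
      by (subst (asm) sum.swap) (simp add: mult.assoc)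
  qed
  have "(if i = j then of_nat m else 0) = (\<Sum>s<m. z ^ (s * i) * inverse z ^ (s * j))"
    using orthogonality[OF i j] by (simp add: mult.commute)
  also have "\<dots> = (\<Sum>l<m. mmult m G Ginv i l * (\<Sum>s<m. z ^ (l * s) * inverse z ^ (s * j)))"
    unfolding expand sum_distrib_left sum_distrib_right
    by (subst sum.swap) (simp add: mult_ac)
  also have "\<dots> = mmult m G Ginv i j * of_nat m"
    using j by (simp add: orthogonality if_distrib cong: if_cong)
  finally show ?thesis
    using m_pos by (auto split: if_splits)
qed

lemma Ginv_Gmat:
  assumes k: "k < m" and a: "a < m"
  shows "mmult m Ginv G k a = (if k = a then 1 else 0)"
proof -
  define r where "r k = mmult m Ginv G k a - (if k = a then 1 else 0)" for k
  have kernel: "mvmult m G r j = 0" if j: "j < m" for j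
  proof -
    have "mvmult m G r j = mmult m G (mmult m Ginv G) j a - G j a"
      unfolding mvmult_def r_def right_diff_distrib sum_subtractf
      using a by (simp add: mmult_def[of m G] if_distrib cong: if_cong)
    also have "mmult m G (mmult m Ginv G) j a = mmult m (mmult m G Ginv) G j a"
      by (rule mmult_assoc[symmetric])
    also have "mmult m (mmult m G Ginv) G j a = (\<Sum>k<m. if j = k then G k a else 0)"
      unfolding mmult_def[of m "mmult m G Ginv"] by (rule sum.cong) (simp_all add: Gmat_Ginv j)
    finally show ?thesis
      using j by simp
  qed
  have "r k = 0"
    by (rule lower_triangular_kernel[OF _ G_upper kernel k]) (simp add: G_diag)
  then show ?thesis
    by (simp add: r_def)
qed

lemma transpose_Ginv_transpose_Gmat:
  assumes k: "k < m"
  shows "mvmult m (mtrans Ginv) (mvmult m (mtrans G) x) k = x k"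
proof -
  have "mvmult m (mtrans Ginv) (mvmult m (mtrans G) x) k = (\<Sum>j<m. mmult m G Ginv j k * x j)"
    by (simp only: mvmult_mmult[symmetric]) (simp add: mvmult_def mmult_def mtrans_def mult_ac)
  also have "\<dots> = (\<Sum>j<m. if j = k then x k else 0)"
    by (rule sum.cong) (simp_all add: Gmat_Ginv k)
  finally show ?thesis
    using k by simp
qed

lemma transpose_Gmat_inj:
  assumes "\<And>i. i < m \<Longrightarrow> mvmult m (mtrans G) x i = mvmult m (mtrans G) y i" and "k < m"
  shows "x k = y k"
  using transpose_Ginv_transpose_Gmat[of k x] transpose_Ginv_transpose_Gmat[of k y] assms
  by (metis mvmult_cong)

lemma omega_eq_mvmult: "j < m \<Longrightarrow> omega m z a j = mvmult m (Vmat z) a j"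
  by (simp add: omega_def mvmult_def Vmat_def mult.commute)

lemma transpose_Gmat_omega:
  assumes a: "\<And>k. k < m \<Longrightarrow> a k = mvmult m G w k" and i: "i < m"
  shows "mvmult m (mtrans G) (omega m z a) i = of_nat m / D i * w i"
proof -
  have "omega m z a k = mvmult m (Vmat z) (mvmult m G w) k" if "k < m" for k
    by (simp add: omega_eq_mvmult[OF that] mvmult_cong[OF a])
  then have "mvmult m (mtrans G) (omega m z a) i
      = mvmult m (mmult m (mmult m (mtrans G) (Vmat z)) G) w i"
    by (simp add: mvmult_mmult cong: mvmult_cong)
  also have "\<dots> = (\<Sum>l<m. if i = l then of_nat m / D l * w l else 0)"
    unfolding mvmult_def by (rule sum.cong) (simp_all add: Gmat_transpose_Vmat_Gmat i)
  finally show ?thesis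
    using i by simp
qed

lemma omega_image_transpose_Gmat:
  assumes "y \<in> omega_image m z"
  obtains w where "\<And>i. i < m \<Longrightarrow> w i \<in> Zz z"
    and "\<And>i. i < m \<Longrightarrow> mvmult m (mtrans G) y i = of_nat m / D i * w i"
proof -
  obtain a where a: "a \<in> prodZ m z" and y: "y = omega m z a"
    using assms unfolding omega_image_def by blast
  define w where "w = mvmult m Ginv a"
  have "w i \<in> Zz z" if "i < m" for i
    using a that unfolding w_def mvmult_def prodZ_def by (auto intro!: Zz_sum Zz_mult Ginv_in_Zz)
  moreover have "a k = mvmult m G w k" if "k < m" for k
  proof -
    have "mvmult m G w k = (\<Sum>j<m. mmult m G Ginv k j * a j)"
      by (simp only: w_def mvmult_mmult[symmetric]) (simp add: mvmult_def)
    also have "\<dots> = (\<Sum>j<m. if j = k then a k else 0)"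
      by (rule sum.cong) (auto simp: Gmat_Ginv that)
    finally show ?thesis
      using that by simp
  qed
  ultimately show ?thesis
    using that transpose_Gmat_omega y by blast
qed

lemma in_omega_imageI:
  assumes y: "\<And>k. m \<le> k \<Longrightarrow> y k = 0"
    and w: "\<And>i. i < m \<Longrightarrow> w i \<in> Zz z"
    and Gy: "\<And>i. i < m \<Longrightarrow> mvmult m (mtrans G) y i = of_nat m / D i * w i"
  shows "y \<in> omega_image m z"
proof -
  define a where "a k = (if k < m then mvmult m G w k else 0)" for k
  have "a \<in> prodZ m z"
    using w unfolding prodZ_def a_def mvmult_def by (auto intro!: Zz_sum Zz_mult G_in_Zz)
  moreover have "omega m z a = y"
  proof
    fix k
    show "omega m z a k = y k"
    proof (cases "k < m")
      case True
      show ?thesis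
        by (rule transpose_Gmat_inj[OF _ True]) (simp add: transpose_Gmat_omega a_def Gy)
    qed (simp add: omega_def y)
  qed
  ultimately show ?thesis
    unfolding omega_image_def by blast
qed

lemma omega_prodZ: "a \<in> prodZ m z \<Longrightarrow> omega m z a \<in> prodZ m z"
  unfolding prodZ_def omega_def by (auto intro!: Zz_sum Zz_mult Zz_power Zz_self)

lemma sum_qbinom_eq_transpose_Gmat:
  "i < m \<Longrightarrow> (\<Sum>j\<in>{i..<m}. y j * qbinom (inverse z) j i) = mvmult m (mtrans G) y i"
  unfolding mvmult_def mtrans_def Gmat_def
  by (rule sum.mono_neutral_cong_left) (auto simp: qbinom_eq_0)

lemma omega_image_eq:
  "omega_image m z = {y \<in> prodZ m z. \<forall>i<m.
     (\<Sum>j\<in>{i..<m}. y j * qbinom (inverse z) j i) \<in> {w * (of_nat m / P i) | w. w \<in> Zz z}}"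
proof (intro equalityI subsetI)
  fix y assume y: "y \<in> omega_image m z"
  obtain w where w: "\<And>i. i < m \<Longrightarrow> w i \<in> Zz z"
    and Gy: "\<And>i. i < m \<Longrightarrow> mvmult m (mtrans G) y i = of_nat m / D i * w i"
    using omega_image_transpose_Gmat[OF y] by blast
  have "(\<Sum>j\<in>{i..<m}. y j * qbinom (inverse z) j i) \<in> {w * (of_nat m / P i) | w. w \<in> Zz z}"
    if i: "i < m" for i
  proof -
    have "(\<Sum>j\<in>{i..<m}. y j * qbinom (inverse z) j i) = (z ^ i\<^sup>2 * w i) * (of_nat m / P i)"
      by (simp add: sum_qbinom_eq_transpose_Gmat i Gy m_div_D)
    then show ?thesis
      using w[OF i] by (blast intro: Zz_mult Zz_power Zz_self)
  qed
  moreover have "y \<in> prodZ m z"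
    using y omega_prodZ unfolding omega_image_def by blast
  ultimately show "y \<in> {y \<in> prodZ m z. \<forall>i<m.
     (\<Sum>j\<in>{i..<m}. y j * qbinom (inverse z) j i) \<in> {w * (of_nat m / P i) | w. w \<in> Zz z}}"
    by blast
next
  fix y assume "y \<in> {y \<in> prodZ m z. \<forall>i<m.
     (\<Sum>j\<in>{i..<m}. y j * qbinom (inverse z) j i) \<in> {w * (of_nat m / P i) | w. w \<in> Zz z}}"
  then have y: "y \<in> prodZ m z"
    and "\<forall>i<m. \<exists>w. mvmult m (mtrans G) y i = w * (of_nat m / P i) \<and> w \<in> Zz z"
    by (auto simp: sum_qbinom_eq_transpose_Gmat)
  then obtain W where W: "\<And>i. i < m \<Longrightarrow> mvmult m (mtrans G) y i = W i * (of_nat m / P i)"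
    "\<And>i. i < m \<Longrightarrow> W i \<in> Zz z"
    by metis
  show "y \<in> omega_image m z"
  proof (rule in_omega_imageI[where w = "\<lambda>i. inverse z ^ i\<^sup>2 * W i"])
    show "y k = 0" if "m \<le> k" for k
      using y that by (simp add: prodZ_def)
    show "inverse z ^ i\<^sup>2 * W i \<in> Zz z" if "i < m" for i
      using W(2)[OF that] by (intro Zz_mult Zz_power inverse_z_in_Zz)
    show "mvmult m (mtrans G) y i = of_nat m / D i * (inverse z ^ i\<^sup>2 * W i)" if "i < m" for i
    proof -
      have "of_nat m / D i * (inverse z ^ i\<^sup>2 * W i)
          = (z ^ i\<^sup>2 * inverse z ^ i\<^sup>2) * (W i * (of_nat m / P i))"
        by (simp only: m_div_D mult_ac)
      then show ?thesis
        by (simp add: power_z_mult_inverse W(1)[OF that])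
    qed
  qed
qed

definition bvec_unit :: "nat \<Rightarrow> complex" where
  "bvec_unit j = (- 1) ^ j * z ^ (j choose 2) * inverse z ^ j\<^sup>2"

lemma bvec_eq_Ginv: "k < m \<Longrightarrow> bvec m z j k = bvec_unit j * (of_nat m / D j) * Ginv j k"
proof -
  assume k: "k < m"
  have "bvec_unit j * (of_nat m / D j) * Ginv j k
      = ((- 1) ^ j * (- 1) ^ j) * (z ^ (j choose 2) * inverse z ^ (j choose 2))
        * (z ^ j\<^sup>2 * inverse z ^ j\<^sup>2) * ((- 1) ^ k * z ^ (k choose 2) * (of_nat m / P j) * qbinom z j k)"
    by (simp only: bvec_unit_def Ginv_def m_div_D mult_ac)
  also have "\<dots> = bvec m z j k"
    using k by (simp add: power_z_mult_inverse bvec_def flip: power_add)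
  finally show ?thesis ..
qed

lemma transpose_Gmat_bvec_combination:
  assumes i: "i < m"
  shows "mvmult m (mtrans G) (\<lambda>k. \<Sum>j<m. c j * bvec m z j k) i = c i * bvec_unit i * (of_nat m / D i)"
proof -
  have "mvmult m (mtrans G) (\<lambda>k. \<Sum>j<m. c j * bvec m z j k) i
      = (\<Sum>j<m. c j * bvec_unit j * (of_nat m / D j) * mmult m Ginv G j i)"
    unfolding mvmult_def mmult_def mtrans_def sum_distrib_left sum_distrib_right
    by (subst sum.swap) (simp add: bvec_eq_Ginv mult_ac)
  also have "\<dots> = (\<Sum>j<m. if j = i then c i * bvec_unit i * (of_nat m / D i) else 0)"
    by (rule sum.cong) (simp_all add: Ginv_Gmat i)
  finally show ?thesis
    using i by simp
qed

lemma omega_image_eq_span: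
  "omega_image m z = {(\<lambda>k. \<Sum>j<m. c j * bvec m z j k) | c. c \<in> prodZ m z}"
proof (intro equalityI subsetI)
  fix y assume y: "y \<in> omega_image m z"
  obtain w where w: "\<And>i. i < m \<Longrightarrow> w i \<in> Zz z"
    and Gy: "\<And>i. i < m \<Longrightarrow> mvmult m (mtrans G) y i = of_nat m / D i * w i"
    using omega_image_transpose_Gmat[OF y] by blast
  define c where "c i = (if i < m then (- 1) ^ i * inverse z ^ (i choose 2) * z ^ i\<^sup>2 * w i else 0)" for i
  have "c \<in> prodZ m z"
    using w unfolding prodZ_def c_def by (auto intro!: Zz_mult Zz_power Zz_neg_one_power Zz_self inverse_z_in_Zz)
  moreover have "(\<lambda>k. \<Sum>j<m. c j * bvec m z j k) = y"
  proof
    fix k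
    show "(\<Sum>j<m. c j * bvec m z j k) = y k"
    proof (cases "k < m")
      case True
      have cw: "c i * bvec_unit i = w i" if "i < m" for i
      proof -
        have "c i * bvec_unit i = ((- 1) ^ i * (- 1) ^ i) * (z ^ (i choose 2) * inverse z ^ (i choose 2))
            * (z ^ i\<^sup>2 * inverse z ^ i\<^sup>2) * w i"
          using that by (simp add: c_def bvec_unit_def mult_ac)
        then show ?thesis
          by (simp add: power_z_mult_inverse flip: power_add)
      qed
      show ?thesis
        by (rule transpose_Gmat_inj[OF _ True]) (simp add: transpose_Gmat_bvec_combination Gy cw)
    next
      case False
      then show ?thesis
        using y unfolding omega_image_def by (auto simp: bvec_def omega_def)
    qed
  qed
  ultimately show "y \<in> {(\<lambda>k. \<Sum>j<m. c j * bvec m z j k) | c. c \<in> prodZ m z}"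
    by blast
next
  fix y assume "y \<in> {(\<lambda>k. \<Sum>j<m. c j * bvec m z j k) | c. c \<in> prodZ m z}"
  then obtain c where c: "c \<in> prodZ m z" and y: "y = (\<lambda>k. \<Sum>j<m. c j * bvec m z j k)"
    by blast
  show "y \<in> omega_image m z"
  proof (rule in_omega_imageI[where w = "\<lambda>i. c i * bvec_unit i"])
    show "y k = 0" if "m \<le> k" for k
      using that by (simp add: y bvec_def)
    show "c i * bvec_unit i \<in> Zz z" if "i < m" for i
      using c that unfolding prodZ_def bvec_unit_def
      by (auto intro!: Zz_mult Zz_power Zz_neg_one_power Zz_self inverse_z_in_Zz)
    show "mvmult m (mtrans G) y i = of_nat m / D i * (c i * bvec_unit i)" if "i < m" for i
      using that by (simp add: y transpose_Gmat_bvec_combination)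
  qed
qed

lemma bvec_in_omega_image:
  assumes j: "j < m"
  shows "bvec m z j \<in> omega_image m z"
proof -
  define e :: "nat \<Rightarrow> complex" where "e l = (if l = j then 1 else 0)" for l
  have "(\<lambda>k. \<Sum>l<m. e l * bvec m z l k) = bvec m z j"
  proof
    fix k
    have "(\<Sum>l<m. e l * bvec m z l k) = (\<Sum>l<m. if l = j then bvec m z j k else 0)"
      by (rule sum.cong) (simp_all add: e_def)
    then show "(\<Sum>l<m. e l * bvec m z l k) = bvec m z j k"
      using j by simp
  qed
  moreover have "e \<in> prodZ m z"
    using j by (auto simp: e_def prodZ_def Zz_0 Zz_1)
  ultimately show ?thesis
    unfolding omega_image_eq_span by (blast intro: sym)
qed

lemma bvec_linear_independent:
  assumes "(\<lambda>k. \<Sum>j<m. c j * bvec m z j k) = (\<lambda>k. 0)" and j: "j < m"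
  shows "c j = 0"
proof -
  have "c j * bvec_unit j * (of_nat m / D j) = 0"
    using transpose_Gmat_bvec_combination[OF j, of c] assms(1) by (simp add: mvmult_def)
  moreover have "bvec_unit j \<noteq> 0" "of_nat m / D j \<noteq> 0"
    using z_nonzero D_nonzero[OF j] m_pos by (simp_all add: bvec_unit_def)
  ultimately show ?thesis
    by simp
qed

end

theorem proposition3p8:
  fixes m :: nat and z :: complex
  assumes m: "m \<ge> 1"
    and root: "z ^ m = 1"
    and prim: "\<And>k. 0 < k \<Longrightarrow> k < m \<Longrightarrow> z ^ k \<noteq> 1"
  shows
    "(\<forall>i<m. \<forall>j<m.
        mmult m (mmult m (mtrans (Gmat (inverse z))) (Vmat z)) (Gmat (inverse z)) i j
          = (if i = j then of_nat m / Ddiag (inverse z) i else 0))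
     \<and> (\<forall>i<m. of_nat m / Ddiag (inverse z) i
          = of_nat m * z ^ (i ^ 2) / (\<Prod>j\<in>{1..i}. 1 - z ^ j))
     \<and> omega_image m z =
        {y \<in> prodZ m z. \<forall>i<m.
           (\<Sum>j\<in>{i..<m}. y j * qbinom (inverse z) j i)
             \<in> {w * (of_nat m / (\<Prod>j\<in>{1..i}. 1 - z ^ j)) | w. w \<in> Zz z}}
     \<and> (\<forall>j<m. bvec m z j \<in> omega_image m z)
     \<and> omega_image m z = {(\<lambda>k. \<Sum>j<m. c j * bvec m z j k) | c. c \<in> prodZ m z}
     \<and> (\<forall>c. (\<forall>j<m. c j \<in> Zz z) \<longrightarrow> (\<lambda>k. \<Sum>j<m. c j * bvec m z j k) = (\<lambda>k. 0)
           \<longrightarrow> (\<forall>j<m. c j = 0))"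
proof -
  interpret primitive_root m z
    using m root prim by unfold_locales auto
  have "of_nat m / D i = of_nat m * z ^ i\<^sup>2 / P i" for i
    by (simp add: m_div_D)
  then show ?thesis
    using Gmat_transpose_Vmat_Gmat omega_image_eq bvec_in_omega_image omega_image_eq_span
      bvec_linear_independent
    by simp
qed

end
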